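(* There is no assignment rule (defined for profiles of every number $n$ of agents over alternatives $\{A,B\}$) that is both stable and strategyproof over the domain of all minimally-interleaving profiles.
   Context: Agents $V=\{v_1,\dots,v_n\}$; two alternatives $A,B$. Each agent $v_i$ has a strict total order $\succ_i$ on $\{A,B\}\times\{1,\dots,n\}$, where $(S,j)$ means being in the community adopting $S$ of size $j$; it is monotonic if $(S,j)\succ_i(S,k)$ whenever $k<j$. A preference is non-interleaving if it is monotonic and $(A,1)\succ(B,n)$ or $(B,1)\succ(A,n)$. A preference is minimally-interleaving if it is monotonic and either $(A,2)\succ(B,n)\succ(A,1)\succ(B,n-1)$ or $(B,2)\succ(A,n)\succ(B,1)\succ(A,n-1)$. A profile is minimally-interleaving if each of its orders is non-interleaving or minimally-interleaving. An assignment is a map $f:V\to\{A,B\}$; $v_i$ prefers $f$ to $g$ if $(f(v_i),|f^{-1}(f(v_i))|)\succ_i(g(v_i),|g^{-1}(g(v_i))|)$. An assignment $f$ is stable if there is no assignment $f'\neq f$ such that every agent $v_i$ with $f'(v_i)\neq f(v_i)$ prefers $f'$ to $f$. An assignment rule $R$ maps profiles to assignments; it is stable if $R(V)$ is stable whenever $V$ admits a stable assignment. $R$ is strategyproof over a domain $D$ if for every $V\in D$ with $f=R(V)$ there is no agent $v_i$ and monotonic order $\succ_i'$ such that, with $V'$ obtained by replacing $\succ_i$ by $\succ_i'$ and $f'=R(V')$, agent $v_i$ prefers $f'$ to $f$ according to her true order. *)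

theory Defs
  imports Main
begin

datatype alt = A | B

text \<open>A preference is a relation on alternatives-with-community-size;
  p x y means x is strictly preferred to y.\<close>
type_synonym pref = "alt \<times> nat \<Rightarrow> alt \<times> nat \<Rightarrow> bool"

definition outcomes :: "nat \<Rightarrow> (alt \<times> nat) set" where
  "outcomes n = UNIV \<times> {1..n}"

definition strict_total :: "nat \<Rightarrow> pref \<Rightarrow> bool" where
  "strict_total n p \<longleftrightarrow>
     (\<forall>x y. p x y \<longrightarrow> x \<in> outcomes n \<and> y \<in> outcomes n) \<and>
     (\<forall>x. \<not> p x x) \<and>
     (\<forall>x y z. p x y \<longrightarrow> p y z \<longrightarrow> p x z) \<and>
     (\<forall>x\<in>outcomes n. \<forall>y\<in>outcomes n. x \<noteq> y \<longrightarrow> p x y \<or> p y x)"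

definition monotonic :: "nat \<Rightarrow> pref \<Rightarrow> bool" where
  "monotonic n p \<longleftrightarrow> strict_total n p \<and>
     (\<forall>S j k. 1 \<le> k \<longrightarrow> k < j \<longrightarrow> j \<le> n \<longrightarrow> p (S, j) (S, k))"

definition non_interleaving :: "nat \<Rightarrow> pref \<Rightarrow> bool" where
  "non_interleaving n p \<longleftrightarrow> monotonic n p \<and> (p (A, 1) (B, n) \<or> p (B, 1) (A, n))"

definition minimally_interleaving :: "nat \<Rightarrow> pref \<Rightarrow> bool" where
  "minimally_interleaving n p \<longleftrightarrow> monotonic n p \<and>
     ((p (A, 2) (B, n) \<and> p (B, n) (A, 1) \<and> p (A, 1) (B, n - 1)) \<or>
      (p (B, 2) (A, n) \<and> p (A, n) (B, 1) \<and> p (B, 1) (A, n - 1)))"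

text \<open>A profile of n = length V agents; agent i (i < n) has order V ! i.\<close>
definition is_profile :: "pref list \<Rightarrow> bool" where
  "is_profile V \<longleftrightarrow> (\<forall>i < length V. strict_total (length V) (V ! i))"

definition MI_domain :: "pref list set" where
  "MI_domain = {V. is_profile V \<and>
     (\<forall>i < length V. non_interleaving (length V) (V ! i) \<or>
                     minimally_interleaving (length V) (V ! i))}"

text \<open>Assignments are functions nat => alt; only agents i < n matter.\<close>
definition comm_size :: "nat \<Rightarrow> (nat \<Rightarrow> alt) \<Rightarrow> nat \<Rightarrow> nat" where
  "comm_size n f i = card {j. j < n \<and> f j = f i}"

definition prefers :: "pref \<Rightarrow> nat \<Rightarrow> (nat \<Rightarrow> alt) \<Rightarrow> (nat \<Rightarrow> alt) \<Rightarrow> nat \<Rightarrow> bool" where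
  "prefers p n f g i \<longleftrightarrow> p (f i, comm_size n f i) (g i, comm_size n g i)"

definition stable :: "pref list \<Rightarrow> (nat \<Rightarrow> alt) \<Rightarrow> bool" where
  "stable V f \<longleftrightarrow> \<not> (\<exists>f'. (\<exists>i < length V. f' i \<noteq> f i) \<and>
       (\<forall>i < length V. f' i \<noteq> f i \<longrightarrow> prefers (V ! i) (length V) f' f i))"

type_synonym rule = "pref list \<Rightarrow> (nat \<Rightarrow> alt)"

definition stable_rule :: "rule \<Rightarrow> bool" where
  "stable_rule R \<longleftrightarrow> (\<forall>V. is_profile V \<and> (\<exists>f. stable V f) \<longrightarrow> stable V (R V))"

definition strategyproof :: "rule \<Rightarrow> pref list set \<Rightarrow> bool" where
  "strategyproof R D \<longleftrightarrow> (\<forall>V \<in> D. \<forall>i < length V. \<forall>q. monotonic (length V) q \<longrightarrow>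
      \<not> prefers (V ! i) (length V) (R (V[i := q])) (R V) i)"

end

theory Submission
  imports Defs
begin

text \<open>Two agents suffice. Let agent 0 rank \<open>(A,2) \<succ> (B,2) \<succ> (A,1) \<succ> (B,1)\<close> and agent 1
  the mirror image; both orders are minimally interleaving. The stable assignments of this
  profile are exactly the two unanimous ones, so a stable rule picks one of them, say all-\<open>A\<close>.
  Agent 1 then reports the non-interleaving order \<open>(B,2) \<succ> (B,1) \<succ> (A,2) \<succ> (A,1)\<close>, under
  which all-\<open>B\<close> becomes the only stable assignment; the rule must switch to it, which agent 1
  truly prefers. The case all-\<open>B\<close> is symmetric.\<close>

fun ranking :: "(alt \<times> nat) list \<Rightarrow> pref" where
  "ranking [] x y \<longleftrightarrow> False"
| "ranking (z # zs) x y \<longleftrightarrow> (x = z \<and> y \<in> set zs) \<or> ranking zs x y"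

lemma ranking_imp_mem: "ranking xs x y \<Longrightarrow> x \<in> set xs \<and> y \<in> set xs"
  by (induction xs) auto

lemma ranking_irrefl: "distinct xs \<Longrightarrow> \<not> ranking xs x x"
  by (induction xs) (auto dest: ranking_imp_mem)

lemma ranking_trans: "distinct xs \<Longrightarrow> ranking xs x y \<Longrightarrow> ranking xs y z \<Longrightarrow> ranking xs x z"
  by (induction xs) (auto dest: ranking_imp_mem)

lemma ranking_total:
  "x \<in> set xs \<Longrightarrow> y \<in> set xs \<Longrightarrow> x \<noteq> y \<Longrightarrow> ranking xs x y \<or> ranking xs y x"
  by (induction xs) auto

lemma strict_total_ranking:
  assumes "distinct xs" and "set xs = outcomes n"
  shows "strict_total n (ranking xs)"
  unfolding strict_total_def
  using assms ranking_imp_mem ranking_irrefl ranking_trans ranking_total by blast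

lemma UNIV_alt: "(UNIV :: alt set) = {A, B}"
  using alt.exhaust by blast

lemma all_alt: "(\<forall>x::alt. P x) \<longleftrightarrow> P A \<and> P B"
  by (metis alt.exhaust)

lemma ex_alt: "(\<exists>x::alt. P x) \<longleftrightarrow> P A \<or> P B"
  by (metis alt.exhaust)

lemma outcomes_two: "outcomes 2 = {(A, 1), (A, 2), (B, 1), (B, 2)}"
  unfolding outcomes_def UNIV_alt by auto

lemma monotonic_two_iff:
  "monotonic 2 p \<longleftrightarrow> strict_total 2 p \<and> p (A, 2) (A, 1) \<and> p (B, 2) (B, 1)"
proof -
  have "(\<forall>S j k. 1 \<le> k \<longrightarrow> k < j \<longrightarrow> j \<le> (2::nat) \<longrightarrow> p (S, j) (S, k)) \<longleftrightarrow>
      (\<forall>S. p (S, 2) (S, 1))"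
  proof (intro iffI allI impI)
    fix S and j k :: nat
    assume "\<forall>S. p (S, 2) (S, 1)" and "1 \<le> k" "k < j" "j \<le> 2"
    moreover from \<open>1 \<le> k\<close> \<open>k < j\<close> \<open>j \<le> 2\<close> have "k = 1" "j = 2"
      by arith+
    ultimately show "p (S, j) (S, k)"
      by simp
  qed simp
  then show ?thesis
    unfolding monotonic_def all_alt by simp
qed

lemma monotonic_two_ranking:
  assumes "distinct xs" and "set xs = outcomes 2"
    and "ranking xs (A, 2) (A, 1)" and "ranking xs (B, 2) (B, 1)"
  shows "monotonic 2 (ranking xs)"
  using assms strict_total_ranking monotonic_two_iff by blast

lemma length_duo: "length [p, q] = 2"
  by simp

lemma all_less_two: "(\<forall>i < 2. P i) \<longleftrightarrow> P (0::nat) \<and> P 1"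
  by (auto simp: less_2_cases_iff)

lemma ex_less_two: "(\<exists>i < 2. P i) \<longleftrightarrow> P (0::nat) \<or> P 1"
  by (auto simp: less_2_cases_iff)

lemma comm_size_two: "i < 2 \<Longrightarrow> comm_size 2 f i = (if f 0 = f 1 then 2 else 1)"
proof -
  assume "i < 2"
  then have "{j. j < 2 \<and> f j = f i} = (if f 0 = f 1 then {0, 1} else {i})"
    by (auto simp: less_2_cases_iff)
  then show ?thesis
    by (simp add: comm_size_def)
qed

definition duo_outcome :: "alt \<Rightarrow> alt \<Rightarrow> alt \<times> nat" where
  "duo_outcome own other = (own, if own = other then 2 else 1)"

lemma prefers_duo:
  "prefers r 2 g f 0 \<longleftrightarrow> r (duo_outcome (g 0) (g 1)) (duo_outcome (f 0) (f 1))"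
  "prefers r 2 g f 1 \<longleftrightarrow> r (duo_outcome (g 1) (g 0)) (duo_outcome (f 1) (f 0))"
  by (auto simp: prefers_def comm_size_two duo_outcome_def)

lemma stable_duo_iff:
  "stable [p, q] f \<longleftrightarrow> \<not> (\<exists>a b. (a \<noteq> f 0 \<or> b \<noteq> f 1) \<and>
     (a \<noteq> f 0 \<longrightarrow> p (duo_outcome a b) (duo_outcome (f 0) (f 1))) \<and>
     (b \<noteq> f 1 \<longrightarrow> q (duo_outcome b a) (duo_outcome (f 1) (f 0))))"
    (is "_ \<longleftrightarrow> \<not> (\<exists>a b. ?deviation a b)")
proof -
  have "[p, q] ! 1 = q"
    by simp
  then have "(\<exists>g. (\<exists>i < 2. g i \<noteq> f i) \<and>
      (\<forall>i < 2. g i \<noteq> f i \<longrightarrow> prefers ([p, q] ! i) 2 g f i)) \<longleftrightarrow>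
      (\<exists>g :: nat \<Rightarrow> alt. ?deviation (g 0) (g 1))"
    by (simp only: all_less_two ex_less_two nth_Cons_0 prefers_duo)
  also have "\<dots> \<longleftrightarrow> (\<exists>a b. ?deviation a b)"
  proof
    assume "\<exists>a b. ?deviation a b"
    then obtain a b where "?deviation a b"
      by blast
    then show "\<exists>g :: nat \<Rightarrow> alt. ?deviation (g 0) (g 1)"
      by (intro exI[of _ "\<lambda>i :: nat. if i = 0 then a else b"]) simp
  qed blast
  finally show ?thesis
    by (simp only: stable_def length_duo)
qed

lemma is_profile_duo_iff: "is_profile [p, q] \<longleftrightarrow> strict_total 2 p \<and> strict_total 2 q"
  unfolding is_profile_def length_duo all_less_two by simp

definition lean_A :: pref where
  "lean_A = ranking [(A, 2), (B, 2), (A, 1), (B, 1)]"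

definition lean_B :: pref where
  "lean_B = ranking [(B, 2), (A, 2), (B, 1), (A, 1)]"

definition loyal_A :: pref where
  "loyal_A = ranking [(A, 2), (A, 1), (B, 2), (B, 1)]"

definition loyal_B :: pref where
  "loyal_B = ranking [(B, 2), (B, 1), (A, 2), (A, 1)]"

lemmas example_prefs = lean_A_def lean_B_def loyal_A_def loyal_B_def

lemma monotonic_example_prefs:
  "monotonic 2 lean_A" "monotonic 2 lean_B" "monotonic 2 loyal_A" "monotonic 2 loyal_B"
  unfolding example_prefs by (auto intro!: monotonic_two_ranking simp: outcomes_two)

lemma lean_profile_MI_domain: "[lean_A, lean_B] \<in> MI_domain"
  using monotonic_example_prefs
  unfolding MI_domain_def mem_Collect_eq is_profile_duo_iff length_duo all_less_two
  by (auto simp: monotonic_def minimally_interleaving_def example_prefs)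

lemma stable_lean_iff: "stable [lean_A, lean_B] f \<longleftrightarrow> f 0 = f 1"
  by (cases "f 0"; cases "f 1") (auto simp: stable_duo_iff ex_alt duo_outcome_def example_prefs)

lemma stable_loyal_A_iff: "stable [loyal_A, lean_B] f \<longleftrightarrow> f 0 = A \<and> f 1 = A"
  by (cases "f 0"; cases "f 1") (auto simp: stable_duo_iff ex_alt duo_outcome_def example_prefs)

lemma stable_loyal_B_iff: "stable [lean_A, loyal_B] f \<longleftrightarrow> f 0 = B \<and> f 1 = B"
  by (cases "f 0"; cases "f 1") (auto simp: stable_duo_iff ex_alt duo_outcome_def example_prefs)

lemma stable_rule_characterised:
  assumes "stable_rule R" and "is_profile V" and "\<And>f. stable V f \<longleftrightarrow> P f" and "P f"
  shows "P (R V)"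
  using assms unfolding stable_rule_def by blast

lemma strategyproofD:
  assumes "strategyproof R D" and "V \<in> D" and "i < length V" and "monotonic (length V) q"
  shows "\<not> prefers (V ! i) (length V) (R (V[i := q])) (R V) i"
  using assms unfolding strategyproof_def by blast

theorem mainTheorem8:
  shows "\<not> (\<exists>R :: rule. stable_rule R \<and> strategyproof R MI_domain)"
proof
  assume "\<exists>R :: rule. stable_rule R \<and> strategyproof R MI_domain"
  then obtain R where stab: "stable_rule R" and sp: "strategyproof R MI_domain"
    by blast
  have profiles: "is_profile [lean_A, lean_B]" "is_profile [loyal_A, lean_B]"
      "is_profile [lean_A, loyal_B]"
    using monotonic_example_prefs by (simp_all add: is_profile_duo_iff monotonic_def)
  have unanimous: "R [lean_A, lean_B] 0 = R [lean_A, lean_B] 1"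
    by (rule stable_rule_characterised[OF stab profiles(1) stable_lean_iff, of "\<lambda>_. A"]) simp
  have to_A: "R [loyal_A, lean_B] 0 = A \<and> R [loyal_A, lean_B] 1 = A"
    by (rule stable_rule_characterised[OF stab profiles(2) stable_loyal_A_iff, of "\<lambda>_. A"]) simp
  have to_B: "R [lean_A, loyal_B] 0 = B \<and> R [lean_A, loyal_B] 1 = B"
    by (rule stable_rule_characterised[OF stab profiles(3) stable_loyal_B_iff, of "\<lambda>_. B"]) simp
  have "\<not> prefers lean_A 2 (R [loyal_A, lean_B]) (R [lean_A, lean_B]) 0"
    using strategyproofD[OF sp lean_profile_MI_domain, of 0 loyal_A] monotonic_example_prefs(3)
    unfolding length_duo by simp
  moreover have "\<not> prefers lean_B 2 (R [lean_A, loyal_B]) (R [lean_A, lean_B]) 1"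
    using strategyproofD[OF sp lean_profile_MI_domain, of 1 loyal_B] monotonic_example_prefs(4)
    unfolding length_duo by simp
  ultimately show False
    using unanimous to_A to_B
    unfolding prefers_duo \<comment> \<open>before \<open>simp\<close> rewrites the agent index \<open>1\<close> to \<open>Suc 0\<close>\<close>
    by (cases "R [lean_A, lean_B] 0") (simp_all add: duo_outcome_def example_prefs)
qed

end
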